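(* Let $G$ be a one-point union of cycles of order $p$, i.e. a graph obtained from a collection of cycles by identifying one vertex from each cycle into a single common vertex. Then $str(G)=p+2$.
   Context: For a graph $G$ of order $p$, a numbering of $G$ is a bijection $f:V(G)\to[1,p]$. The strength of a numbering $f$ is $str_f(G)=\max\{f(u)+f(v): uv\in E(G)\}$, and the strength of a graph $G$ with at least one edge is $str(G)=\min\{str_f(G): f \text{ a numbering of } G\}$. *)

theory Defs
  imports Main
begin

text \<open>Simple graphs: a finite vertex set V and an edge set E of 2-element subsets of V.\<close>

definition numbering :: "'a set \<Rightarrow> ('a \<Rightarrow> nat) \<Rightarrow> bool" where
  "numbering V f \<longleftrightarrow> bij_betw f V {1..card V}"

definition strength_of :: "'a set set \<Rightarrow> ('a \<Rightarrow> nat) \<Rightarrow> nat" where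
  "strength_of E f = Max {f u + f v | u v. {u, v} \<in> E}"

definition strength :: "'a set \<Rightarrow> 'a set set \<Rightarrow> nat" where
  "strength V E = Min {strength_of E f | f. numbering V f}"

definition cycle_edges :: "'a list \<Rightarrow> 'a set set" where
  "cycle_edges xs = {{xs ! i, xs ! ((i + 1) mod length xs)} | i. i < length xs}"

definition one_point_union_of_cycles :: "'a set \<Rightarrow> 'a set set \<Rightarrow> bool" where
  "one_point_union_of_cycles V E \<longleftrightarrow>
    (\<exists>c C. finite C \<and> C \<noteq> {} \<and>
       (\<forall>xs\<in>C. distinct xs \<and> length xs \<ge> 3 \<and> hd xs = c) \<and>
       (\<forall>xs\<in>C. \<forall>ys\<in>C. xs \<noteq> ys \<longrightarrow> set xs \<inter> set ys = {c}) \<and>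
       V = (\<Union>xs\<in>C. set xs) \<and>
       E = (\<Union>xs\<in>C. cycle_edges xs))"

end

theory Submission
  imports Defs
begin

text \<open>The label p = card V sits on a vertex with two distinct neighbours, whose labels cannot
  both be 1, so some edge has label sum at least p + 2. Conversely, label the common vertex 1 and
  walk through the remaining vertices cycle by cycle, labelling them p, 2, p - 1, 3, p - 2, ...
  in this order. Consecutive labels of this zigzag sum to p + 1 or p + 2, every edge away from the
  common vertex joins two consecutive vertices of the walk, and an edge at the common vertex has
  sum at most 1 + p.\<close>

lemma numbering_range:
  assumes "numbering V f" "x \<in> V"
  shows "f x \<in> {1..card V}"
  using assms unfolding numbering_def by (rule bij_betw_apply)

lemma finite_edge_sums:
  assumes "finite V" "\<forall>e\<in>E. e \<subseteq> V"
  shows "finite {f u + f v | u v. {u, v} \<in> E}"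
proof (rule finite_subset)
  show "{f u + f v | u v. {u, v} \<in> E} \<subseteq> (\<lambda>(u, v). f u + f v) ` (V \<times> V)"
  proof
    fix s assume "s \<in> {f u + f v | u v. {u, v} \<in> E}"
    then obtain u v where "s = f u + f v" "{u, v} \<in> E" by blast
    moreover from this(2) have "(u, v) \<in> V \<times> V" using assms(2) by blast
    ultimately show "s \<in> (\<lambda>(u, v). f u + f v) ` (V \<times> V)" by force
  qed
qed (use assms(1) in simp)

lemma edge_sum_le_strength_of:
  assumes "finite V" "\<forall>e\<in>E. e \<subseteq> V" "{u, v} \<in> E"
  shows "f u + f v \<le> strength_of E f"
proof -
  have "f u + f v \<in> {f u + f v | u v. {u, v} \<in> E}" using assms(3) by blast
  then show ?thesis
    unfolding strength_of_def using finite_edge_sums[OF assms(1,2)] by (rule Max_ge[rotated])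
qed

lemma strength_of_le:
  assumes "finite V" "\<forall>e\<in>E. e \<subseteq> V" "\<exists>u v. {u, v} \<in> E"
    and "\<And>u v. {u, v} \<in> E \<Longrightarrow> f u + f v \<le> k"
  shows "strength_of E f \<le> k"
  unfolding strength_of_def
proof (rule Max.boundedI[OF finite_edge_sums[OF assms(1,2)]])
  show "{f u + f v | u v. {u, v} \<in> E} \<noteq> {}" using assms(3) by blast
  fix s assume "s \<in> {f u + f v | u v. {u, v} \<in> E}"
  then show "s \<le> k" using assms(4) by blast
qed

lemma strength_eqI:
  assumes "finite V" "\<forall>e\<in>E. e \<subseteq> V" "\<exists>u v. {u, v} \<in> E"
    and lower: "\<And>f. numbering V f \<Longrightarrow> k \<le> strength_of E f"
    and "numbering V f" "strength_of E f \<le> k"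
  shows "strength V E = k"
proof -
  define S where "S = {strength_of E f | f. numbering V f}"
  have "S \<subseteq> {..2 * card V}"
  proof
    fix s assume "s \<in> S"
    then obtain g where "numbering V g" "s = strength_of E g" unfolding S_def by blast
    moreover have "g u + g v \<le> 2 * card V" if "{u, v} \<in> E" for u v
      using that assms(2) numbering_range[OF \<open>numbering V g\<close>, of u]
        numbering_range[OF \<open>numbering V g\<close>, of v] by auto
    ultimately show "s \<in> {..2 * card V}" using strength_of_le[OF assms(1-3)] by auto
  qed
  then have "finite S" by (rule finite_subset) simp
  moreover have "strength_of E f \<in> S" unfolding S_def using assms(5) by blast
  ultimately have "Min S \<le> k" "Min S \<in> S"
    using order_trans[OF Min_le assms(6)] Min_in by blast+
  then obtain g where "numbering V g" "Min S = strength_of E g" unfolding S_def by blast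
  with \<open>Min S \<le> k\<close> show ?thesis
    unfolding strength_def S_def[symmetric] using lower by fastforce
qed

lemma card_add_2_le_strength_of:
  assumes "finite V" "V \<noteq> {}" "\<forall>e\<in>E. e \<subseteq> V" "numbering V f"
    and two_neighbours:
      "\<And>w. w \<in> V \<Longrightarrow> \<exists>a b. a \<noteq> b \<and> a \<noteq> w \<and> b \<noteq> w \<and> {w, a} \<in> E \<and> {w, b} \<in> E"
  shows "card V + 2 \<le> strength_of E f"
proof -
  have bij: "bij_betw f V {1..card V}" using assms(4) unfolding numbering_def .
  moreover have "card V \<in> {1..card V}" using assms(1,2) by (simp add: Suc_leI card_gt_0_iff)
  ultimately obtain w where w: "w \<in> V" "f w = card V"
    unfolding bij_betw_def by (metis imageE)
  obtain a b where ab: "a \<noteq> b" "a \<noteq> w" "b \<noteq> w" "{w, a} \<in> E" "{w, b} \<in> E"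
    using two_neighbours[OF w(1)] by blast
  then have "a \<in> V" "b \<in> V" using assms(3) by blast+
  moreover have "inj_on f V" using bij by (rule bij_betw_imp_inj_on)
  ultimately have "f a \<noteq> f b" "f a \<noteq> f w" "f b \<noteq> f w"
    using ab w(1) by (metis inj_onD)+
  moreover have "f a \<in> {1..card V}" "f b \<in> {1..card V}"
    using \<open>a \<in> V\<close> \<open>b \<in> V\<close> numbering_range[OF assms(4)] by blast+
  ultimately have "2 \<le> f a \<or> 2 \<le> f b" using w(2) by auto
  then show ?thesis
    using edge_sum_le_strength_of[OF assms(1,3) ab(4), of f]
      edge_sum_le_strength_of[OF assms(1,3) ab(5), of f] w(2) by auto
qed

definition zigzag :: "nat \<Rightarrow> nat \<Rightarrow> nat" where
  "zigzag p j = (if even j then p - j div 2 else j div 2 + 2)"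

lemma zigzag_double [simp]: "zigzag p (2 * a) = p - a"
  by (simp add: zigzag_def)

lemma zigzag_double_Suc [simp]: "zigzag p (Suc (2 * a)) = a + 2"
  by (simp add: zigzag_def)

lemma nat_halves_cases:
  fixes j :: nat
  obtains a where "j = 2 * a" | a where "j = Suc (2 * a)"
  by (cases "even j") (auto elim!: evenE oddE)

lemma zigzag_Suc_le:
  assumes "Suc j < p - 1"
  shows "zigzag p j + zigzag p (Suc j) \<le> p + 2"
proof (cases j rule: nat_halves_cases)
  case (1 a)
  then have "zigzag p j = p - a" "zigzag p (Suc j) = a + 2" by simp_all
  then show ?thesis using 1 assms by linarith
next
  case (2 a)
  then have "zigzag p j = a + 2" "zigzag p (Suc j) = p - (a + 1)"
    using zigzag_double[of p "a + 1"] by simp_all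
  then show ?thesis using 2 assms by linarith
qed

lemma zigzag_bij: "bij_betw (zigzag p) {..<p - 1} {2..p}"
proof (rule bij_betw_imageI)
  show "inj_on (zigzag p) {..<p - 1}"
  proof (rule inj_onI)
    fix j k assume "j \<in> {..<p - 1}" "k \<in> {..<p - 1}" "zigzag p j = zigzag p k"
    then show "j = k"
      by (cases j rule: nat_halves_cases; cases k rule: nat_halves_cases) auto
  qed
  have "zigzag p ` {..<p - 1} \<subseteq> {2..p}"
  proof
    fix x assume "x \<in> zigzag p ` {..<p - 1}"
    then obtain j where "j < p - 1" "x = zigzag p j" by auto
    then show "x \<in> {2..p}" by (cases j rule: nat_halves_cases) auto
  qed
  with \<open>inj_on (zigzag p) {..<p - 1}\<close> show "zigzag p ` {..<p - 1} = {2..p}"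
    by (intro card_subset_eq) (auto simp: card_image)
qed

definition zigzag_numbering :: "'a \<Rightarrow> 'a list \<Rightarrow> 'a \<Rightarrow> nat" where
  "zigzag_numbering c L x =
     (if x = c then 1 else zigzag (length L + 1) (inv_into {..<length L} ((!) L) x))"

lemma zigzag_numbering_nth:
  assumes "distinct L" "j < length L" "L ! j \<noteq> c"
  shows "zigzag_numbering c L (L ! j) = zigzag (length L + 1) j"
  using assms by (simp add: zigzag_numbering_def inj_on_nth)

lemma card_eq_length_Suc:
  assumes "finite V" "c \<in> V" "distinct L" "set L = V - {c}"
  shows "card V = length L + 1"
  using card.remove[OF assms(1,2)] distinct_card[OF assms(3)] assms(4) by simp

lemma numbering_zigzag_numbering:
  assumes "finite V" "c \<in> V" "distinct L" "set L = V - {c}"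
  shows "numbering V (zigzag_numbering c L)"
proof -
  have card: "card V = length L + 1" using card_eq_length_Suc[OF assms] .
  have "bij_betw (inv_into {..<length L} ((!) L)) (V - {c}) {..<length L}"
    using bij_betw_inv_into[OF bij_betw_nth[OF assms(3) refl refl]] assms(4) by simp
  then have "bij_betw (zigzag (length L + 1) \<circ> inv_into {..<length L} ((!) L))
      (V - {c}) {2..length L + 1}"
    using zigzag_bij[of "length L + 1"] by (simp add: bij_betw_trans)
  moreover have "\<And>x. x \<in> V - {c} \<Longrightarrow>
      zigzag_numbering c L x = (zigzag (length L + 1) \<circ> inv_into {..<length L} ((!) L)) x"
    by (simp add: zigzag_numbering_def)
  ultimately have "bij_betw (zigzag_numbering c L) (V - {c}) {2..length L + 1}"
    using bij_betw_cong by blast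
  moreover have "c \<notin> V - {c}" "zigzag_numbering c L c \<notin> {2..length L + 1}"
    by (simp_all add: zigzag_numbering_def)
  ultimately have "bij_betw (zigzag_numbering c L) ((V - {c}) \<union> {c}) ({2..length L + 1} \<union> {1})"
    using notIn_Un_bij_betw[of c "V - {c}" "zigzag_numbering c L"] by (simp add: zigzag_numbering_def)
  moreover have "(V - {c}) \<union> {c} = V" "{2..length L + 1} \<union> {1} = {1..card V}"
    using assms(2) card by auto
  ultimately show ?thesis unfolding numbering_def by simp
qed

lemma strength_of_zigzag_numbering_le:
  assumes "finite V" "c \<in> V" "distinct L" "set L = V - {c}"
    and "\<forall>e\<in>E. e \<subseteq> V" "\<exists>u v. {u, v} \<in> E"
    and path: "\<And>e. e \<in> E \<Longrightarrow> c \<in> e \<or> (\<exists>j. Suc j < length L \<and> e = {L ! j, L ! Suc j})"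
  shows "strength_of E (zigzag_numbering c L) \<le> card V + 2"
proof (rule strength_of_le[OF assms(1,5,6)])
  let ?f = "zigzag_numbering c L"
  fix u v assume uv: "{u, v} \<in> E"
  then consider "c \<in> {u, v}" | j where "Suc j < length L" "{u, v} = {L ! j, L ! Suc j}"
    using path by blast
  then show "?f u + ?f v \<le> card V + 2"
  proof cases
    case 1
    have "?f u \<le> card V" "?f v \<le> card V"
      using uv assms(5) numbering_range[OF numbering_zigzag_numbering[OF assms(1-4)]] by auto
    moreover have "?f c = 1" by (simp add: zigzag_numbering_def)
    ultimately show ?thesis using 1 by auto
  next
    case (2 j)
    then have "L ! j \<noteq> c" "L ! Suc j \<noteq> c" using assms(4) nth_mem by fastforce+
    then have "?f u + ?f v = zigzag (length L + 1) j + zigzag (length L + 1) (Suc j)"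
      using 2 zigzag_numbering_nth[OF assms(3)] by (auto simp: doubleton_eq_iff)
    also have "\<dots> \<le> card V + 2"
      using zigzag_Suc_le[of j "length L + 1"] 2(1) card_eq_length_Suc[OF assms(1-4)] by simp
    finally show ?thesis .
  qed
qed

lemma cycle_index_neighbours:
  fixes i n :: nat
  assumes "i < n" "3 \<le> n"
  defines "j \<equiv> if i = 0 then n - 1 else i - 1"
  shows "j < n" "(j + 1) mod n = i" "(i + 1) mod n < n"
    "(i + 1) mod n \<noteq> i" "j \<noteq> i" "(i + 1) mod n \<noteq> j"
proof -
  have next_eq: "(i + 1) mod n = (if i + 1 < n then i + 1 else 0)"
    using assms(1) by (cases "i + 1 = n") auto
  show "(j + 1) mod n = i"
    using assms unfolding j_def by (cases "i = 0") auto
  show "j < n" "(i + 1) mod n < n" "(i + 1) mod n \<noteq> i" "j \<noteq> i" "(i + 1) mod n \<noteq> j"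
    unfolding next_eq j_def using assms by auto
qed

lemma cycle_edges_subset:
  assumes "e \<in> cycle_edges xs"
  shows "e \<subseteq> set xs"
proof -
  obtain i where "i < length xs" "e = {xs ! i, xs ! ((i + 1) mod length xs)}"
    using assms unfolding cycle_edges_def by blast
  moreover from this(1) have "0 < length xs" by linarith
  then have "(i + 1) mod length xs < length xs" by (rule mod_less_divisor)
  ultimately show ?thesis by simp
qed

lemma cycle_edges_two_neighbours:
  assumes "distinct xs" "3 \<le> length xs" "x \<in> set xs"
  shows "\<exists>a b. a \<noteq> b \<and> a \<noteq> x \<and> b \<noteq> x \<and>
    {x, a} \<in> cycle_edges xs \<and> {x, b} \<in> cycle_edges xs"
proof -
  define n where "n = length xs"
  obtain i where i: "i < n" "x = xs ! i" using assms(3) unfolding n_def by (metis in_set_conv_nth)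
  define j where "j = (if i = 0 then n - 1 else i - 1)"
  note idx = cycle_index_neighbours[OF i(1) assms(2)[folded n_def], folded j_def]
  have "{x, xs ! ((i + 1) mod n)} \<in> cycle_edges xs"
    using i unfolding cycle_edges_def n_def by blast
  moreover have "{xs ! j, xs ! ((j + 1) mod n)} \<in> cycle_edges xs"
    using idx(1) unfolding cycle_edges_def n_def by blast
  then have "{x, xs ! j} \<in> cycle_edges xs" using idx(2) i(2) by (simp add: insert_commute)
  moreover have "xs ! ((i + 1) mod n) \<noteq> xs ! j" "xs ! ((i + 1) mod n) \<noteq> x" "xs ! j \<noteq> x"
    using idx i assms(1) unfolding n_def by (simp_all add: nth_eq_iff_index_eq)
  ultimately show ?thesis by blast
qed

lemma cycle_edges_cases:
  assumes "e \<in> cycle_edges xs"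
  shows "hd xs \<in> e \<or> (\<exists>j. Suc j < length (tl xs) \<and> e = {tl xs ! j, tl xs ! Suc j})"
proof -
  define n where "n = length xs"
  obtain i where i: "i < n" "e = {xs ! i, xs ! ((i + 1) mod n)}"
    using assms unfolding cycle_edges_def n_def by blast
  then have hd: "hd xs = xs ! 0" unfolding n_def by (intro hd_conv_nth) auto
  consider "i = 0" | "i + 1 = n" | "0 < i" "i + 1 < n" using i(1) by linarith
  then show ?thesis
  proof cases
    case 1
    then show ?thesis using i hd by simp
  next
    case 2
    then show ?thesis using i hd by simp
  next
    case 3
    then have "e = {tl xs ! (i - 1), tl xs ! Suc (i - 1)}" "Suc (i - 1) < length (tl xs)"
      using i unfolding n_def by (simp_all add: nth_tl)
    then show ?thesis by blast
  qed
qed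

lemma nth_concat_consecutive:
  assumes "ys \<in> set yss" "Suc j < length ys"
  obtains k where "Suc k < length (concat yss)"
    "concat yss ! k = ys ! j" "concat yss ! Suc k = ys ! Suc j"
proof -
  obtain A B where "yss = A @ ys # B" using split_list[OF assms(1)] by blast
  then have yss: "concat yss = concat A @ ys @ concat B" by simp
  show ?thesis
  proof
    show "Suc (length (concat A) + j) < length (concat yss)" using assms(2) yss by simp
    show "concat yss ! (length (concat A) + j) = ys ! j"
      using assms(2) unfolding yss by (simp add: nth_append)
    show "concat yss ! Suc (length (concat A) + j) = ys ! Suc j"
      using assms(2) unfolding yss by (simp add: nth_append)
  qed
qed

lemma one_point_union_of_cycles_graph:
  assumes "one_point_union_of_cycles V E"
  shows "finite V" "\<forall>e\<in>E. e \<subseteq> V"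
    and "\<And>w. w \<in> V \<Longrightarrow> \<exists>a b. a \<noteq> b \<and> a \<noteq> w \<and> b \<noteq> w \<and> {w, a} \<in> E \<and> {w, b} \<in> E"
proof -
  obtain c C where "finite C" and cyc: "\<forall>xs\<in>C. distinct xs \<and> length xs \<ge> 3 \<and> hd xs = c"
    and V: "V = (\<Union>xs\<in>C. set xs)" and E: "E = (\<Union>xs\<in>C. cycle_edges xs)"
    using assms unfolding one_point_union_of_cycles_def by blast
  show "finite V" using \<open>finite C\<close> V by simp
  show "\<forall>e\<in>E. e \<subseteq> V" using cycle_edges_subset V E by blast
  fix w assume "w \<in> V"
  then obtain xs where "xs \<in> C" "w \<in> set xs" using V by blast
  then show "\<exists>a b. a \<noteq> b \<and> a \<noteq> w \<and> b \<noteq> w \<and> {w, a} \<in> E \<and> {w, b} \<in> E"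
    using cycle_edges_two_neighbours[of xs w] cyc E by blast
qed

lemma one_point_union_of_cycles_path:
  assumes "one_point_union_of_cycles V E"
  obtains c L where "c \<in> V" "distinct L" "set L = V - {c}"
    "\<And>e. e \<in> E \<Longrightarrow> c \<in> e \<or> (\<exists>j. Suc j < length L \<and> e = {L ! j, L ! Suc j})"
proof -
  obtain c C where "finite C" "C \<noteq> {}"
    and cyc: "\<forall>xs\<in>C. distinct xs \<and> length xs \<ge> 3 \<and> hd xs = c"
    and disj: "\<forall>xs\<in>C. \<forall>ys\<in>C. xs \<noteq> ys \<longrightarrow> set xs \<inter> set ys = {c}"
    and V: "V = (\<Union>xs\<in>C. set xs)" and E: "E = (\<Union>xs\<in>C. cycle_edges xs)"
    using assms unfolding one_point_union_of_cycles_def by blast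
  obtain ls where ls: "set ls = C" "distinct ls" using finite_distinct_list[OF \<open>finite C\<close>] by blast
  define L where "L = concat (map tl ls)"
  have cons: "xs = c # tl xs" if "xs \<in> C" for xs
    using cyc that by (metis list.collapse list.size(3) not_numeral_le_zero)
  have set_tl: "set (tl xs) = set xs - {c}" if "xs \<in> C" for xs
    using cons[OF that] cyc that by (metis Diff_insert_absorb distinct.simps(2) list.simps(15))
  have "c \<in> V"
  proof -
    obtain xs where "xs \<in> C" using \<open>C \<noteq> {}\<close> by blast
    then show ?thesis using cons V by (metis UN_iff list.set_intros(1))
  qed
  moreover have "distinct L" unfolding L_def
  proof (rule distinct_concat)
    have "inj_on tl C" using cons by (metis inj_onI)
    then show "distinct (map tl ls)" using ls by (simp add: distinct_map)
    show "distinct ys" if "ys \<in> set (map tl ls)" for ys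
      using that ls cyc by (auto simp: distinct_tl)
    show "set ys \<inter> set zs = {}"
      if tails: "ys \<in> set (map tl ls)" "zs \<in> set (map tl ls)" "ys \<noteq> zs" for ys zs
    proof -
      obtain xs xs' where "xs \<in> C" "xs' \<in> C" "ys = tl xs" "zs = tl xs'" "xs \<noteq> xs'"
        using tails ls by auto
      then show ?thesis using set_tl disj by blast
    qed
  qed
  moreover have "set L = V - {c}" unfolding L_def using ls set_tl V by auto
  moreover have "c \<in> e \<or> (\<exists>j. Suc j < length L \<and> e = {L ! j, L ! Suc j})" if "e \<in> E" for e
  proof -
    obtain xs where xs: "xs \<in> C" "e \<in> cycle_edges xs" using \<open>e \<in> E\<close> E by blast
    then have "hd xs = c" using cyc by blast
    moreover have "\<exists>k. Suc k < length L \<and> e = {L ! k, L ! Suc k}"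
      if "Suc j < length (tl xs)" "e = {tl xs ! j, tl xs ! Suc j}" for j
      using nth_concat_consecutive[of "tl xs" "map tl ls" j] that xs(1) ls(1)
      unfolding L_def by (metis image_eqI set_map)
    ultimately show ?thesis using cycle_edges_cases[OF xs(2)] by blast
  qed
  ultimately show ?thesis using that by blast
qed

theorem mainTheorem4:
  fixes V :: "'a set" and E :: "'a set set"
  assumes "one_point_union_of_cycles V E"
  shows "strength V E = card V + 2"
proof -
  note graph = one_point_union_of_cycles_graph[OF assms]
  obtain c L where path: "c \<in> V" "distinct L" "set L = V - {c}"
    "\<And>e. e \<in> E \<Longrightarrow> c \<in> e \<or> (\<exists>j. Suc j < length L \<and> e = {L ! j, L ! Suc j})"
    using one_point_union_of_cycles_path[OF assms] by blast
  have edge: "\<exists>u v. {u, v} \<in> E" using graph(3)[OF path(1)] by blast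
  show ?thesis
  proof (rule strength_eqI[OF graph(1,2) edge])
    show "card V + 2 \<le> strength_of E f" if "numbering V f" for f
      using card_add_2_le_strength_of[OF graph(1) _ graph(2) that graph(3)] path(1) by blast
    show "numbering V (zigzag_numbering c L)"
      using numbering_zigzag_numbering[OF graph(1) path(1-3)] .
    show "strength_of E (zigzag_numbering c L) \<le> card V + 2"
      using strength_of_zigzag_numbering_le[OF graph(1) path(1-3) graph(2) edge path(4)] .
  qed
qed

end
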